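(* Let $\mathcal{V}$ be the vector space of all complex sequences $\vec{a}=(a_n)_{n\ge 0}$, and let $C:\mathcal{V}\to\mathcal{V}$ be the Cesàro matrix acting by matrix multiplication, $(C\vec a)_N=\frac{1}{N+1}\sum_{j=0}^{N}a_j$ for $N\ge 0$. For each $m\in\mathbb{N}_0=\{0,1,2,\dots\}$ let $\vec b_m\in\mathcal{V}$ be the sequence whose $n$-th entry is $0$ for $0\le n<m$ and $\binom{n}{m}$ for $n\ge m$ (i.e. $\vec b_m=(0,\dots,0,\binom{m}{m},\binom{m+1}{m},\binom{m+2}{m},\dots)$ with $m$ leading zeros). Then for each $m\in\mathbb{N}_0$, $$C\vec b_m=\frac{1}{m+1}\vec b_m.$$ Moreover, each of these eigenspaces (the eigenspace of $C$ on $\mathcal{V}$ for the eigenvalue $\frac{1}{m+1}$) is one dimensional.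
   Context: The Cesàro matrix is the infinite lower-triangular matrix $C=[c_{ij}]_{i,j\ge 0}$ with $c_{ij}=\frac{1}{i+1}$ for $j\le i$ and $c_{ij}=0$ for $j>i$; since it is lower triangular, $C\vec a$ is defined for every complex sequence $\vec a$. *)

theory Defs
  imports "HOL-Analysis.Analysis" "HOL-Library.Function_Algebras"
begin

definition seq_scale :: "complex \<Rightarrow> (nat \<Rightarrow> complex) \<Rightarrow> (nat \<Rightarrow> complex)" where
  "seq_scale c a = (\<lambda>n. c * a n)"

definition cesaro :: "(nat \<Rightarrow> complex) \<Rightarrow> (nat \<Rightarrow> complex)" where
  "cesaro a = (\<lambda>N. (\<Sum>j\<le>N. a j) / of_nat (N + 1))"

definition bvec :: "nat \<Rightarrow> (nat \<Rightarrow> complex)" where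
  "bvec m = (\<lambda>n. if n < m then 0 else of_nat (n choose m))"

definition cesaro_eigenspace :: "complex \<Rightarrow> (nat \<Rightarrow> complex) set" where
  "cesaro_eigenspace c = {a. cesaro a = seq_scale c a}"

end

theory Submission
  imports Defs
begin

text \<open>
  Since (N + 1) (C a)_N is the N-th partial sum of a, the equation C a = a / (m + 1) says
  (m + 1) (a_0 + ... + a_N) = (N + 1) a_N for all N. Subtracting consecutive instances gives
  the recurrence (N + 1) a_N = (N + 1 - m) a_(N+1), which together with m a_0 = 0 forces an
  eigenvector vanishing at m to vanish everywhere; so the eigenspace is at most one-dimensional.
  The hockey-stick identity sum_(j<=N) (j choose m) = (N + 1 choose m + 1) shows that b_m lies in it.
\<close>

interpretation seq: vector_space seq_scale
  by unfold_locales (auto simp: seq_scale_def fun_eq_iff algebra_simps)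

lemma cesaro_eq_seq_scale_iff:
  "cesaro a = seq_scale c a \<longleftrightarrow> (\<forall>N. (\<Sum>j\<le>N. a j) = c * of_nat (N + 1) * a N)"
proof -
  have "(\<Sum>j\<le>N. a j) / of_nat (N + 1) = c * a N \<longleftrightarrow> (\<Sum>j\<le>N. a j) = c * of_nat (N + 1) * a N"
    for N
    by (simp add: divide_eq_eq mult_ac del: of_nat_Suc)
  then show ?thesis
    by (simp add: cesaro_def seq_scale_def fun_eq_iff)
qed

lemma subspace_cesaro_eigenspace: "seq.subspace (cesaro_eigenspace c)"
  unfolding seq.subspace_def cesaro_eigenspace_def cesaro_eq_seq_scale_iff
  by (simp add: seq_scale_def sum.distrib sum_distrib_left[symmetric] algebra_simps)

lemma bvec_apply: "bvec m n = of_nat (n choose m)"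
  by (simp add: bvec_def)

lemma cesaro_bvec: "cesaro (bvec m) = seq_scale (1 / of_nat (m + 1)) (bvec m)"
  unfolding cesaro_eq_seq_scale_iff
proof
  fix N
  have "(\<Sum>j\<le>N. bvec m j) = of_nat (Suc N choose Suc m)"
    by (simp add: bvec_apply of_nat_sum[symmetric] sum_choose_upper del: binomial_Suc_Suc)
  also have "\<dots> = of_nat (Suc N * (N choose m)) / of_nat (Suc m)"
    unfolding Suc_times_binomial_eq of_nat_mult
    by (rule nonzero_mult_div_cancel_right[symmetric]) (rule of_nat_neq_0)
  finally show "(\<Sum>j\<le>N. bvec m j) = 1 / of_nat (m + 1) * of_nat (N + 1) * bvec m N"
    by (simp add: bvec_apply algebra_simps)
qed

lemma cesaro_eigen_partial_sum:
  assumes "cesaro a = seq_scale (1 / of_nat (m + 1)) a"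
  shows "of_nat (m + 1) * (\<Sum>j\<le>N. a j) = of_nat (N + 1) * a N"
  using assms unfolding cesaro_eq_seq_scale_iff by (simp del: of_nat_Suc)

lemma cesaro_eigen_recurrence:
  assumes "cesaro a = seq_scale (1 / of_nat (m + 1)) a"
  shows "of_nat (N + 1) * a N = (of_nat (N + 1) - of_nat m) * a (Suc N)"
proof -
  have "of_nat (m + 1) * (\<Sum>j\<le>N. a j) + of_nat (m + 1) * a (Suc N) = of_nat (N + 2) * a (Suc N)"
    using cesaro_eigen_partial_sum[OF assms, of "Suc N"] by (simp add: distrib_left)
  with cesaro_eigen_partial_sum[OF assms, of N] show ?thesis
    by (simp add: algebra_simps)
qed

lemma cesaro_eigenvector_eq_0:
  assumes eigen: "cesaro a = seq_scale (1 / of_nat (m + 1)) a" and "a m = 0"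
  shows "a = 0"
proof -
  have "a N = 0" for N
  proof (induction N)
    case 0
    have "of_nat m * a 0 = 0"
      using cesaro_eigen_partial_sum[OF eigen, of 0] by (simp add: algebra_simps)
    then show ?case
      using \<open>a m = 0\<close> by (cases "m = 0") auto
  next
    case (Suc N)
    then have "(of_nat (N + 1) - of_nat m :: complex) * a (Suc N) = 0"
      using cesaro_eigen_recurrence[OF eigen, of N] by simp
    then show ?case
      using \<open>a m = 0\<close> by (cases "Suc N = m") (auto simp del: of_nat_Suc)
  qed
  then show ?thesis
    by auto
qed

lemma cesaro_eigenspace_eq_span_bvec:
  "cesaro_eigenspace (1 / of_nat (m + 1)) = seq.span {bvec m}" (is "?E = _")
proof
  show "seq.span {bvec m} \<subseteq> ?E"
    by (intro seq.span_minimal subspace_cesaro_eigenspace)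
      (simp add: cesaro_eigenspace_def cesaro_bvec)
next
  show "?E \<subseteq> seq.span {bvec m}"
  proof
    fix a assume "a \<in> ?E"
    moreover have "bvec m \<in> ?E"
      by (simp add: cesaro_eigenspace_def cesaro_bvec)
    ultimately have "a - seq_scale (a m) (bvec m) \<in> ?E"
      by (metis subspace_cesaro_eigenspace seq.subspace_diff seq.subspace_scale)
    moreover have "(a - seq_scale (a m) (bvec m)) m = 0"
      by (simp add: seq_scale_def bvec_apply)
    ultimately have "a = seq_scale (a m) (bvec m)"
      using cesaro_eigenvector_eq_0 by (force simp: cesaro_eigenspace_def)
    then show "a \<in> seq.span {bvec m}"
      by (metis seq.span_base seq.span_scale singletonI)
  qed
qed

lemma bvec_neq_0: "bvec m \<noteq> 0"
proof
  assume "bvec m = 0"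
  then have "bvec m m = 0"
    by simp
  then show False
    by (simp add: bvec_apply)
qed

theorem mainTheorem1:
  shows "(\<forall>m::nat. cesaro (bvec m) = seq_scale (1 / of_nat (m + 1)) (bvec m)) \<and>
         (\<forall>m::nat. vector_space.dim seq_scale (cesaro_eigenspace (1 / of_nat (m + 1))) = 1)"
proof (intro conjI allI)
  fix m :: nat
  show "cesaro (bvec m) = seq_scale (1 / of_nat (m + 1)) (bvec m)"
    by (rule cesaro_bvec)
  have "seq.independent {bvec m}"
    using bvec_neq_0 by simp
  then show "seq.dim (cesaro_eigenspace (1 / of_nat (m + 1))) = 1"
    unfolding cesaro_eigenspace_eq_span_bvec using seq.dim_span_eq_card_independent by fastforce
qed

end
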